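(* For any pair of objects $A$ and $B$ in $\mathrm{ob}\,\mathcal{A}$, the map \[ \mathrm{d}_{f_\alpha}(A,B)=\inf\Big\{f_\alpha(\mathbf{c}) \mid \mathbf{c}\colon A\xleftrightarrow{\ \varphi\ } C \xleftrightarrow{\ \psi\ } B \Big\}, \] with the convention $\inf\emptyset=\infty$, defines an (extended) pseudometric on $\mathrm{ob}\,\mathcal{A}$.
   Context: Let $\mathcal{A}$ be an abelian category and $\alpha$ an amplitude on $\mathcal{A}$, i.e. a class function $\alpha\colon \mathrm{ob}\,\mathcal{A}\to[0,\infty]$ with $\alpha(0)=0$ such that for every short exact sequence $0\to A\to B\to C\to 0$ in $\mathcal{A}$ one has $\alpha(A)\le\alpha(B)$, $\alpha(C)\le\alpha(B)$ and $\alpha(B)\le\alpha(A)+\alpha(C)$. Let $f\colon[0,\infty]^4\to[0,\infty]$ be a cost function, i.e. $f$ is monotone, subadditive, $f(0)=0$, and $f(x_1,x_2,x_3,x_4)=f(x_3,x_2,x_1,x_4)=f(x_1,x_4,x_3,x_2)$. For a span or cospan $\mathbf{c}\colon A\xleftrightarrow{\ \varphi\ } C \xleftrightarrow{\ \psi\ } B$ in $\mathcal{A}$ (i.e. either $A\xleftarrow{\varphi}C\xrightarrow{\psi}B$ or $A\xrightarrow{\varphi}C\xleftarrow{\psi}B$), its $f$-cost is $f_\alpha(\mathbf{c})=f(\alpha(\ker\varphi),\alpha(\operatorname{coker}\varphi),\alpha(\ker\psi),\alpha(\operatorname{coker}\psi))$. The infimum is taken over all such spans and cospans between $A$ and $B$.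 *)

theory Defs
  imports "HOL-Library.Extended_Nonnegative_Real"
begin

text \<open>Comp g f is g after f (meaningful when Dom g = Cod f).\<close>

record ('o, 'm) abcat =
  Dom  :: "'m \<Rightarrow> 'o"
  Cod  :: "'m \<Rightarrow> 'o"
  Comp :: "'m \<Rightarrow> 'm \<Rightarrow> 'm"
  Ident :: "'o \<Rightarrow> 'm"
  Add  :: "'m \<Rightarrow> 'm \<Rightarrow> 'm"
  Zero :: "'o \<Rightarrow> 'o \<Rightarrow> 'm"

definition hom :: "('o, 'm) abcat \<Rightarrow> 'o \<Rightarrow> 'o \<Rightarrow> 'm set" where
  "hom C a b = {f. Dom C f = a \<and> Cod C f = b}"

definition is_mono :: "('o, 'm) abcat \<Rightarrow> 'm \<Rightarrow> bool" where
  "is_mono C f \<longleftrightarrow> (\<forall>g h. Cod C g = Dom C f \<and> Cod C h = Dom C f \<and> Dom C g = Dom C h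
      \<and> Comp C f g = Comp C f h \<longrightarrow> g = h)"

definition is_epi :: "('o, 'm) abcat \<Rightarrow> 'm \<Rightarrow> bool" where
  "is_epi C f \<longleftrightarrow> (\<forall>g h. Dom C g = Cod C f \<and> Dom C h = Cod C f \<and> Cod C g = Cod C h
      \<and> Comp C g f = Comp C h f \<longrightarrow> g = h)"

definition is_kernel :: "('o, 'm) abcat \<Rightarrow> 'm \<Rightarrow> 'm \<Rightarrow> bool" where
  "is_kernel C k f \<longleftrightarrow> Cod C k = Dom C f \<and> Comp C f k = Zero C (Dom C k) (Cod C f) \<and>
     (\<forall>g. Cod C g = Dom C f \<and> Comp C f g = Zero C (Dom C g) (Cod C f) \<longrightarrow>
        (\<exists>!u. Dom C u = Dom C g \<and> Cod C u = Dom C k \<and> Comp C k u = g))"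

definition is_cokernel :: "('o, 'm) abcat \<Rightarrow> 'm \<Rightarrow> 'm \<Rightarrow> bool" where
  "is_cokernel C q f \<longleftrightarrow> Dom C q = Cod C f \<and> Comp C q f = Zero C (Dom C f) (Cod C q) \<and>
     (\<forall>g. Dom C g = Cod C f \<and> Comp C g f = Zero C (Dom C f) (Cod C g) \<longrightarrow>
        (\<exists>!u. Dom C u = Cod C q \<and> Cod C u = Cod C g \<and> Comp C u q = g))"

definition is_zero_obj :: "('o, 'm) abcat \<Rightarrow> 'o \<Rightarrow> bool" where
  "is_zero_obj C z \<longleftrightarrow> (\<forall>a. (\<exists>!f. f \<in> hom C z a) \<and> (\<exists>!f. f \<in> hom C a z))"

definition abelian_category :: "('o, 'm) abcat \<Rightarrow> bool" where
  "abelian_category C \<longleftrightarrow>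
    \<comment> \<open>category axioms\<close>
    (\<forall>a. Ident C a \<in> hom C a a) \<and>
    (\<forall>f g. Dom C g = Cod C f \<longrightarrow> Comp C g f \<in> hom C (Dom C f) (Cod C g)) \<and>
    (\<forall>f. Comp C (Ident C (Cod C f)) f = f \<and> Comp C f (Ident C (Dom C f)) = f) \<and>
    (\<forall>f g h. Dom C g = Cod C f \<and> Dom C h = Cod C g \<longrightarrow>
        Comp C h (Comp C g f) = Comp C (Comp C h g) f) \<and>
    \<comment> \<open>hom sets are abelian groups\<close>
    (\<forall>a b. Zero C a b \<in> hom C a b) \<and>
    (\<forall>a b. \<forall>f\<in>hom C a b. \<forall>g\<in>hom C a b. Add C f g \<in> hom C a b) \<and>
    (\<forall>a b. \<forall>f\<in>hom C a b. \<forall>g\<in>hom C a b. \<forall>h\<in>hom C a b.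
        Add C (Add C f g) h = Add C f (Add C g h)) \<and>
    (\<forall>a b. \<forall>f\<in>hom C a b. \<forall>g\<in>hom C a b. Add C f g = Add C g f) \<and>
    (\<forall>a b. \<forall>f\<in>hom C a b. Add C (Zero C a b) f = f) \<and>
    (\<forall>a b. \<forall>f\<in>hom C a b. \<exists>g\<in>hom C a b. Add C f g = Zero C a b) \<and>
    \<comment> \<open>composition is bilinear\<close>
    (\<forall>a b c. \<forall>f\<in>hom C a b. \<forall>g\<in>hom C a b. \<forall>h\<in>hom C b c.
        Comp C h (Add C f g) = Add C (Comp C h f) (Comp C h g)) \<and>
    (\<forall>a b c. \<forall>f\<in>hom C b c. \<forall>g\<in>hom C b c. \<forall>h\<in>hom C a b.
        Comp C (Add C f g) h = Add C (Comp C f h) (Comp C g h)) \<and>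
    \<comment> \<open>zero object and binary biproducts\<close>
    (\<exists>z. is_zero_obj C z) \<and>
    (\<forall>a b. \<exists>p i1 i2 p1 p2. i1 \<in> hom C a p \<and> i2 \<in> hom C b p \<and> p1 \<in> hom C p a \<and> p2 \<in> hom C p b \<and>
        Comp C p1 i1 = Ident C a \<and> Comp C p2 i2 = Ident C b \<and>
        Comp C p2 i1 = Zero C a b \<and> Comp C p1 i2 = Zero C b a \<and>
        Add C (Comp C i1 p1) (Comp C i2 p2) = Ident C p) \<and>
    \<comment> \<open>kernels and cokernels exist\<close>
    (\<forall>f. \<exists>k. is_kernel C k f) \<and>
    (\<forall>f. \<exists>q. is_cokernel C q f) \<and>
    \<comment> \<open>every mono is a kernel, every epi is a cokernel\<close>
    (\<forall>m. is_mono C m \<longrightarrow> (\<exists>g. is_kernel C m g)) \<and>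
    (\<forall>e. is_epi C e \<longrightarrow> (\<exists>g. is_cokernel C e g))"

definition short_exact :: "('o, 'm) abcat \<Rightarrow> 'm \<Rightarrow> 'm \<Rightarrow> bool" where
  "short_exact C i p \<longleftrightarrow> is_mono C i \<and> is_epi C p \<and> is_kernel C i p"

definition amplitude :: "('o, 'm) abcat \<Rightarrow> ('o \<Rightarrow> ennreal) \<Rightarrow> bool" where
  "amplitude C \<alpha> \<longleftrightarrow> (\<forall>z. is_zero_obj C z \<longrightarrow> \<alpha> z = 0) \<and>
     (\<forall>i p. short_exact C i p \<longrightarrow>
        \<alpha> (Dom C i) \<le> \<alpha> (Cod C i) \<and> \<alpha> (Cod C p) \<le> \<alpha> (Cod C i) \<and>
        \<alpha> (Cod C i) \<le> \<alpha> (Dom C i) + \<alpha> (Cod C p))"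

definition cost_function :: "(ennreal \<Rightarrow> ennreal \<Rightarrow> ennreal \<Rightarrow> ennreal \<Rightarrow> ennreal) \<Rightarrow> bool" where
  "cost_function f \<longleftrightarrow>
     (\<forall>x1 x2 x3 x4 y1 y2 y3 y4. x1 \<le> y1 \<and> x2 \<le> y2 \<and> x3 \<le> y3 \<and> x4 \<le> y4 \<longrightarrow>
        f x1 x2 x3 x4 \<le> f y1 y2 y3 y4) \<and>
     (\<forall>x1 x2 x3 x4 y1 y2 y3 y4.
        f (x1 + y1) (x2 + y2) (x3 + y3) (x4 + y4) \<le> f x1 x2 x3 x4 + f y1 y2 y3 y4) \<and>
     f 0 0 0 0 = 0 \<and>
     (\<forall>x1 x2 x3 x4. f x1 x2 x3 x4 = f x3 x2 x1 x4 \<and> f x1 x2 x3 x4 = f x1 x4 x3 x2)"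

text \<open>chosen kernel / cokernel objects (the amplitude is isomorphism invariant)\<close>
definition ker_obj :: "('o, 'm) abcat \<Rightarrow> 'm \<Rightarrow> 'o" where
  "ker_obj C f = Dom C (SOME k. is_kernel C k f)"

definition coker_obj :: "('o, 'm) abcat \<Rightarrow> 'm \<Rightarrow> 'o" where
  "coker_obj C f = Cod C (SOME q. is_cokernel C q f)"

definition span_or_cospan :: "('o, 'm) abcat \<Rightarrow> 'o \<Rightarrow> 'o \<Rightarrow> 'm \<Rightarrow> 'm \<Rightarrow> bool" where
  "span_or_cospan C A B \<phi> \<psi> \<longleftrightarrow>
     (Dom C \<phi> = Dom C \<psi> \<and> Cod C \<phi> = A \<and> Cod C \<psi> = B) \<or>
     (Cod C \<phi> = Cod C \<psi> \<and> Dom C \<phi> = A \<and> Dom C \<psi> = B)"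

definition f_cost :: "('o, 'm) abcat \<Rightarrow> ('o \<Rightarrow> ennreal) \<Rightarrow>
    (ennreal \<Rightarrow> ennreal \<Rightarrow> ennreal \<Rightarrow> ennreal \<Rightarrow> ennreal) \<Rightarrow> 'm \<Rightarrow> 'm \<Rightarrow> ennreal" where
  "f_cost C \<alpha> f \<phi> \<psi> = f (\<alpha> (ker_obj C \<phi>)) (\<alpha> (coker_obj C \<phi>)) (\<alpha> (ker_obj C \<psi>)) (\<alpha> (coker_obj C \<psi>))"

text \<open>Inf of the empty set in ennreal is \<infinity>\<close>
definition dist_f :: "('o, 'm) abcat \<Rightarrow> ('o \<Rightarrow> ennreal) \<Rightarrow>
    (ennreal \<Rightarrow> ennreal \<Rightarrow> ennreal \<Rightarrow> ennreal \<Rightarrow> ennreal) \<Rightarrow> 'o \<Rightarrow> 'o \<Rightarrow> ennreal" where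
  "dist_f C \<alpha> f A B = Inf {f_cost C \<alpha> f \<phi> \<psi> | \<phi> \<psi>. span_or_cospan C A B \<phi> \<psi>}"

definition ext_pseudometric :: "('o \<Rightarrow> 'o \<Rightarrow> ennreal) \<Rightarrow> bool" where
  "ext_pseudometric d \<longleftrightarrow> (\<forall>A. d A A = 0) \<and> (\<forall>A B. d A B = d B A) \<and>
     (\<forall>A B D. d A D \<le> d A B + d B D)"

end

theory Submission imports Defs begin

text \<open>Reflexivity and symmetry are immediate: the identity span costs \<open>f 0 0 0 0 = 0\<close>, and swapping
  the two legs of a span permutes the arguments of \<open>f\<close> by one of its symmetries.

  For the triangle inequality, a cospan \<open>A \<rightarrow> X \<leftarrow> B\<close> is first replaced by its pullback span: in an
  abelian category a pulled-back leg has isomorphic kernel and a cokernel that embeds into the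
  cokernel of the opposite leg, so by monotonicity of \<open>\<alpha>\<close> and \<open>f\<close> the cost does not grow. Two spans
  \<open>A \<leftarrow> X \<rightarrow> B\<close> and \<open>B \<leftarrow> Y \<rightarrow> D\<close> are then composed by pulling back \<open>X \<rightarrow> B \<leftarrow> Y\<close>. The exact
  sequence \<open>0 \<rightarrow> ker h \<rightarrow> ker (g h) \<rightarrow> ker g\<close> and its dual give
  \<open>\<alpha> (ker (g h)) \<le> \<alpha> (ker h) + \<alpha> (ker g)\<close> and the same for cokernels, so monotonicity and
  subadditivity of \<open>f\<close> bound the cost of the composite by the sum of the two costs.

  Without elements, pullbacks are built as kernels out of biproducts, diagram chases use
  epimorphisms (which are stable under pullback) in place of elements, and every statement about
  cokernels is the kernel statement in the opposite category.\<close>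

section \<open>Opposite category\<close>

definition op_cat :: "('o, 'm) abcat \<Rightarrow> ('o, 'm) abcat" where
  "op_cat C = \<lparr>Dom = Cod C, Cod = Dom C, Comp = (\<lambda>g f. Comp C f g), Ident = Ident C,
     Add = Add C, Zero = (\<lambda>a b. Zero C b a)\<rparr>"

lemma op_cat_simps [simp]:
  "Dom (op_cat C) = Cod C" "Cod (op_cat C) = Dom C" "Comp (op_cat C) g f = Comp C f g"
  "Ident (op_cat C) = Ident C" "Add (op_cat C) = Add C" "Zero (op_cat C) a b = Zero C b a"
  by (simp_all add: op_cat_def)

lemma op_cat_op_cat [simp]: "op_cat (op_cat C) = C"
  by (simp add: op_cat_def fun_eq_iff)

lemma hom_op_cat [simp]: "hom (op_cat C) a b = hom C b a"
  by (auto simp: hom_def)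

lemma is_mono_op_cat [simp]: "is_mono (op_cat C) f = is_epi C f"
  and is_epi_op_cat [simp]: "is_epi (op_cat C) f = is_mono C f"
  by (auto simp: is_mono_def is_epi_def)

lemma is_kernel_op_cat [simp]: "is_kernel (op_cat C) = is_cokernel C"
  and is_cokernel_op_cat [simp]: "is_cokernel (op_cat C) = is_kernel C"
  by (simp_all add: fun_eq_iff is_kernel_def is_cokernel_def conj_ac)

lemma is_zero_obj_op_cat [simp]: "is_zero_obj (op_cat C) = is_zero_obj C"
  by (simp add: fun_eq_iff is_zero_obj_def conj_commute)

lemma ker_obj_op_cat [simp]: "ker_obj (op_cat C) f = coker_obj C f"
  and coker_obj_op_cat [simp]: "coker_obj (op_cat C) f = ker_obj C f"
  by (simp_all add: ker_obj_def coker_obj_def)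

lemma abelian_category_op_cat:
  assumes "abelian_category C" shows "abelian_category (op_cat C)"
proof -
  have "\<forall>a b. \<exists>p i1 i2 p1 p2. i1 \<in> hom C a p \<and> i2 \<in> hom C b p \<and> p1 \<in> hom C p a \<and>
      p2 \<in> hom C p b \<and> Comp C p1 i1 = Ident C a \<and> Comp C p2 i2 = Ident C b \<and>
      Comp C p2 i1 = Zero C a b \<and> Comp C p1 i2 = Zero C b a \<and>
      Add C (Comp C i1 p1) (Comp C i2 p2) = Ident C p"
    using assms unfolding abelian_category_def by blast
  \<comment> \<open>the same biproducts, read in the opposite category with injections and projections exchanged\<close>
  then have swapped: "\<forall>a b. \<exists>p i1 i2 p1 p2. i1 \<in> hom C p a \<and> i2 \<in> hom C p b \<and> p1 \<in> hom C a p \<and>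
      p2 \<in> hom C b p \<and> Comp C i1 p1 = Ident C a \<and> Comp C i2 p2 = Ident C b \<and>
      Comp C i1 p2 = Zero C b a \<and> Comp C i2 p1 = Zero C a b \<and>
      Add C (Comp C p1 i1) (Comp C p2 i2) = Ident C p"
    by meson
  show ?thesis
    unfolding abelian_category_def
    by (intro conjI) (use assms swapped in \<open>simp_all add: abelian_category_def\<close>)
qed

section \<open>Abelian categories\<close>

locale abelian =
  fixes C :: "('o, 'm) abcat"
  assumes abelian: "abelian_category C"
begin

abbreviation compose (infixr "\<cdot>" 55) where "g \<cdot> f \<equiv> Comp C g f"
abbreviation dm where "dm \<equiv> Dom C"
abbreviation cd where "cd \<equiv> Cod C"
abbreviation idn where "idn \<equiv> Ident C"
abbreviation ad where "ad \<equiv> Add C"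
abbreviation zr where "zr \<equiv> Zero C"

lemma dm_idn [simp]: "dm (idn a) = a"
  and cd_idn [simp]: "cd (idn a) = a"
  using abelian unfolding abelian_category_def hom_def by auto

lemma dm_comp [simp]: "dm g = cd f \<Longrightarrow> dm (g \<cdot> f) = dm f"
  and cd_comp [simp]: "dm g = cd f \<Longrightarrow> cd (g \<cdot> f) = cd g"
  using abelian unfolding abelian_category_def hom_def by auto

lemma comp_idn_left [simp]: "cd f = a \<Longrightarrow> idn a \<cdot> f = f"
  and comp_idn_right [simp]: "dm f = a \<Longrightarrow> f \<cdot> idn a = f"
  using abelian unfolding abelian_category_def hom_def by auto

lemma comp_assoc: "dm g = cd f \<Longrightarrow> dm h = cd g \<Longrightarrow> (h \<cdot> g) \<cdot> f = h \<cdot> (g \<cdot> f)"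
  using abelian unfolding abelian_category_def hom_def by auto

lemma dm_zr [simp]: "dm (zr a b) = a"
  and cd_zr [simp]: "cd (zr a b) = b"
  using abelian unfolding abelian_category_def hom_def by auto

lemma dm_ad [simp]: "dm g = dm f \<Longrightarrow> cd g = cd f \<Longrightarrow> dm (ad f g) = dm f"
  and cd_ad [simp]: "dm g = dm f \<Longrightarrow> cd g = cd f \<Longrightarrow> cd (ad f g) = cd f"
  using abelian unfolding abelian_category_def hom_def by auto

lemma ad_assoc: "dm g = dm f \<Longrightarrow> cd g = cd f \<Longrightarrow> dm h = dm f \<Longrightarrow> cd h = cd f \<Longrightarrow>
    ad (ad f g) h = ad f (ad g h)"
  using abelian unfolding abelian_category_def hom_def by auto

lemma ad_commute: "dm g = dm f \<Longrightarrow> cd g = cd f \<Longrightarrow> ad f g = ad g f"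
  using abelian unfolding abelian_category_def hom_def by auto

lemma ad_zr_left [simp]: "dm f = a \<Longrightarrow> cd f = b \<Longrightarrow> ad (zr a b) f = f"
  using abelian unfolding abelian_category_def hom_def by auto

lemma ad_zr_right [simp]: "dm f = a \<Longrightarrow> cd f = b \<Longrightarrow> ad f (zr a b) = f"
  using ad_zr_left ad_commute by (metis cd_zr dm_zr)

lemma ad_inverse_ex: "\<exists>g. dm g = dm f \<and> cd g = cd f \<and> ad f g = zr (dm f) (cd f)"
  using abelian unfolding abelian_category_def hom_def by auto

lemma comp_ad_distrib_left: "dm g = dm f \<Longrightarrow> cd g = cd f \<Longrightarrow> dm h = cd f \<Longrightarrow>
    h \<cdot> ad f g = ad (h \<cdot> f) (h \<cdot> g)"
  using abelian unfolding abelian_category_def hom_def by auto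

lemma comp_ad_distrib_right: "dm g = dm f \<Longrightarrow> cd g = cd f \<Longrightarrow> cd h = dm f \<Longrightarrow>
    ad f g \<cdot> h = ad (f \<cdot> h) (g \<cdot> h)"
  using abelian unfolding abelian_category_def hom_def by auto

lemma zero_obj_ex: "\<exists>z. is_zero_obj C z"
  using abelian unfolding abelian_category_def by auto

lemma biproduct_ex:
  obtains s i1 i2 p1 p2 where
    "dm i1 = a" "cd i1 = s" "dm i2 = b" "cd i2 = s"
    "dm p1 = s" "cd p1 = a" "dm p2 = s" "cd p2 = b"
    "p1 \<cdot> i1 = idn a" "p2 \<cdot> i2 = idn b" "p2 \<cdot> i1 = zr a b" "p1 \<cdot> i2 = zr b a"
    "ad (i1 \<cdot> p1) (i2 \<cdot> p2) = idn s"
proof -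
  have "\<forall>a b. \<exists>s i1 i2 p1 p2. i1 \<in> hom C a s \<and> i2 \<in> hom C b s \<and> p1 \<in> hom C s a \<and>
      p2 \<in> hom C s b \<and> p1 \<cdot> i1 = idn a \<and> p2 \<cdot> i2 = idn b \<and> p2 \<cdot> i1 = zr a b \<and>
      p1 \<cdot> i2 = zr b a \<and> ad (i1 \<cdot> p1) (i2 \<cdot> p2) = idn s"
    using abelian unfolding abelian_category_def by blast
  then show ?thesis
    using that unfolding hom_def by blast
qed

lemma kernel_ex: "\<exists>k. is_kernel C k f"
  and cokernel_ex: "\<exists>q. is_cokernel C q f"
  using abelian unfolding abelian_category_def by auto

lemma mono_is_kernel: "is_mono C m \<Longrightarrow> \<exists>g. is_kernel C m g"
  using abelian unfolding abelian_category_def by auto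

lemma ad_idem_eq_zr:
  assumes "dm x = a" "cd x = b" "ad x x = x"
  shows "x = zr a b"
proof -
  obtain n where n: "dm n = a" "cd n = b" "ad x n = zr a b"
    using ad_inverse_ex[of x] assms by auto
  have "zr a b = ad (ad x x) n" using assms n by simp
  also have "\<dots> = ad x (ad x n)" by (rule ad_assoc) (use assms n in auto)
  also have "\<dots> = x" using n assms by simp
  finally show ?thesis by simp
qed

lemma comp_zr_right [simp]:
  assumes "dm h = b" shows "h \<cdot> zr a b = zr a (cd h)"
proof -
  have "h \<cdot> zr a b = ad (h \<cdot> zr a b) (h \<cdot> zr a b)"
    using comp_ad_distrib_left[of "zr a b" "zr a b" h] assms by simp
  then show ?thesis using ad_idem_eq_zr[of "h \<cdot> zr a b" a "cd h"] assms by simp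
qed

lemma comp_zr_left [simp]:
  assumes "cd h = a" shows "zr a b \<cdot> h = zr (dm h) b"
proof -
  have "zr a b \<cdot> h = ad (zr a b \<cdot> h) (zr a b \<cdot> h)"
    using comp_ad_distrib_right[of "zr a b" "zr a b" h] assms by simp
  then show ?thesis using ad_idem_eq_zr[of "zr a b \<cdot> h" "dm h" b] assms by simp
qed

lemma ad_right_inverse_unique:
  assumes "dm x = dm n" "cd x = cd n" "dm y = dm n" "cd y = cd n"
    "ad x n = zr (dm n) (cd n)" "ad y n = zr (dm n) (cd n)"
  shows "x = y"
proof -
  have "x = ad x (ad n y)" using assms ad_commute[of y n] by simp
  also have "\<dots> = ad (ad x n) y" by (rule ad_assoc[symmetric]) (use assms in auto)
  also have "\<dots> = y" using assms by simp
  finally show ?thesis .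
qed

lemma abelian_op_cat: "abelian (op_cat C)"
  using abelian abelian_category_op_cat unfolding abelian_def by blast

lemma kernel_cd: "is_kernel C k f \<Longrightarrow> cd k = dm f"
  and kernel_comp_zr: "is_kernel C k f \<Longrightarrow> f \<cdot> k = zr (dm k) (cd f)"
  unfolding is_kernel_def by auto

lemma kernel_lift:
  assumes "is_kernel C k f" "cd g = dm f" "f \<cdot> g = zr (dm g) (cd f)"
  obtains u where "dm u = dm g" "cd u = dm k" "k \<cdot> u = g"
  using assms unfolding is_kernel_def by metis

lemma kernel_lift_unique:
  assumes "is_kernel C k f" "cd g = dm f" "f \<cdot> g = zr (dm g) (cd f)"
    "dm u = dm g" "cd u = dm k" "k \<cdot> u = g" "dm u' = dm g" "cd u' = dm k" "k \<cdot> u' = g"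
  shows "u = u'"
  using assms unfolding is_kernel_def by metis

lemma mono_cancel:
  assumes "is_mono C m" "cd x = dm m" "cd y = dm m" "dm x = dm y" "m \<cdot> x = m \<cdot> y"
  shows "x = y"
  using assms unfolding is_mono_def by blast

lemma kernel_mono:
  assumes K: "is_kernel C k f" shows "is_mono C k"
  unfolding is_mono_def
proof (intro allI impI)
  fix g h assume H: "cd g = dm k \<and> cd h = dm k \<and> dm g = dm h \<and> k \<cdot> g = k \<cdot> h"
  have c: "cd k = dm f" using kernel_cd[OF K] .
  have "f \<cdot> (k \<cdot> g) = (f \<cdot> k) \<cdot> g" using H c by (intro comp_assoc[symmetric]) auto
  also have "\<dots> = zr (dm g) (cd f)" using H kernel_comp_zr[OF K] by simp
  finally have z: "f \<cdot> (k \<cdot> g) = zr (dm (k \<cdot> g)) (cd f)" using H by simp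
  show "g = h"
    by (rule kernel_lift_unique[OF K _ z, of g h]) (use H c in auto)
qed

lemma mono_comp:
  assumes "is_mono C m" "is_mono C n" "dm m = cd n"
  shows "is_mono C (m \<cdot> n)"
  unfolding is_mono_def
proof (intro allI impI)
  fix g h
  assume H: "cd g = dm (m \<cdot> n) \<and> cd h = dm (m \<cdot> n) \<and> dm g = dm h \<and> (m \<cdot> n) \<cdot> g = (m \<cdot> n) \<cdot> h"
  then have "m \<cdot> (n \<cdot> g) = m \<cdot> (n \<cdot> h)" using assms comp_assoc[of n g m] comp_assoc[of n h m] by simp
  then have "n \<cdot> g = n \<cdot> h" using mono_cancel[OF assms(1)] H assms by simp
  then show "g = h" using mono_cancel[OF assms(2)] H assms by simp
qed

lemma mono_comp_imp_mono_right:
  assumes "is_mono C (m \<cdot> n)" "dm m = cd n"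
  shows "is_mono C n"
  unfolding is_mono_def
proof (intro allI impI)
  fix g h assume H: "cd g = dm n \<and> cd h = dm n \<and> dm g = dm h \<and> n \<cdot> g = n \<cdot> h"
  then have "(m \<cdot> n) \<cdot> g = (m \<cdot> n) \<cdot> h" using assms comp_assoc[of n g m] comp_assoc[of n h m] by simp
  then show "g = h" using mono_cancel[OF assms(1)] H assms by simp
qed

lemma mono_cancel_zr:
  assumes "is_mono C m" "cd x = dm m" "m \<cdot> x = zr (dm x) (cd m)"
  shows "x = zr (dm x) (dm m)"
  by (rule mono_cancel[OF assms(1)]) (use assms in simp_all)

lemma mono_if_zr_cancel:
  assumes H: "\<And>x. cd x = dm m \<Longrightarrow> m \<cdot> x = zr (dm x) (cd m) \<Longrightarrow> x = zr (dm x) (dm m)"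
  shows "is_mono C m"
  unfolding is_mono_def
proof (intro allI impI)
  fix g h assume G: "cd g = dm m \<and> cd h = dm m \<and> dm g = dm h \<and> m \<cdot> g = m \<cdot> h"
  obtain n where n: "dm n = dm h" "cd n = cd h" "ad h n = zr (dm h) (cd h)"
    using ad_inverse_ex[of h] by auto
  have "m \<cdot> ad g n = ad (m \<cdot> g) (m \<cdot> n)" using G n by (simp add: comp_ad_distrib_left)
  also have "\<dots> = ad (m \<cdot> h) (m \<cdot> n)" using G by simp
  also have "\<dots> = m \<cdot> ad h n" by (rule comp_ad_distrib_left[symmetric]) (use G n in auto)
  also have "\<dots> = zr (dm h) (cd m)" using G n by simp
  finally have "ad g n = zr (dm (ad g n)) (dm m)" using H[of "ad g n"] G n by simp
  then have "ad g n = zr (dm n) (cd n)" using G n by simp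
  moreover have "ad h n = zr (dm n) (cd n)" using n by simp
  ultimately show "g = h" by (intro ad_right_inverse_unique[of g n h]) (use G n in simp_all)
qed

lemma mono_is_kernel_of_cokernel:
  assumes M: "is_mono C m" and Q: "is_cokernel C q m"
  shows "is_kernel C m q"
proof -
  obtain g where G: "is_kernel C m g" using mono_is_kernel[OF M] by blast
  have cm: "cd m = dm g" using kernel_cd[OF G] .
  have dq: "dm q = cd m" using Q unfolding is_cokernel_def by simp
  obtain t where t: "dm t = cd q" "cd t = cd g" "t \<cdot> q = g"
    using Q kernel_comp_zr[OF G] cm unfolding is_cokernel_def by metis
  show ?thesis unfolding is_kernel_def
  proof (intro conjI allI impI)
    show "cd m = dm q" using dq by simp
    show "q \<cdot> m = zr (dm m) (cd q)" using Q unfolding is_cokernel_def by simp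
    fix x assume X: "cd x = dm q \<and> q \<cdot> x = zr (dm x) (cd q)"
    have "g \<cdot> x = t \<cdot> (q \<cdot> x)" using t X dq comp_assoc[of q x t] by simp
    also have "\<dots> = zr (dm x) (cd g)" using X t by simp
    finally have gx: "g \<cdot> x = zr (dm x) (cd g)" .
    obtain u where u: "dm u = dm x" "cd u = dm m" "m \<cdot> u = x"
      using kernel_lift[OF G, of x] gx X dq cm by metis
    show "\<exists>!u. dm u = dm x \<and> cd u = dm m \<and> m \<cdot> u = x"
    proof (rule ex1I[of _ u])
      show "dm u = dm x \<and> cd u = dm m \<and> m \<cdot> u = x" using u by simp
      fix v assume "dm v = dm x \<and> cd v = dm m \<and> m \<cdot> v = x"
      then show "v = u" using mono_cancel[OF M, of v u] u by simp
    qed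
  qed
qed

lemma cokernel_dm: "is_cokernel C q f \<Longrightarrow> dm q = cd f"
  and cokernel_comp_zr: "is_cokernel C q f \<Longrightarrow> q \<cdot> f = zr (dm f) (cd q)"
  unfolding is_cokernel_def by auto

lemma cokernel_desc:
  assumes "is_cokernel C q f" "dm g = cd f" "g \<cdot> f = zr (dm f) (cd g)"
  obtains u where "dm u = cd q" "cd u = cd g" "u \<cdot> q = g"
  using abelian.kernel_lift[OF abelian_op_cat, of q f g] assms by auto

lemma cokernel_epi: "is_cokernel C q f \<Longrightarrow> is_epi C q"
  using abelian.kernel_mono[OF abelian_op_cat, of q f] by simp

lemma epi_cancel:
  assumes "is_epi C e" "dm x = cd e" "dm y = cd e" "cd x = cd y" "x \<cdot> e = y \<cdot> e"
  shows "x = y"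
  using assms unfolding is_epi_def by blast

lemma epi_comp:
  assumes "is_epi C m" "is_epi C n" "dm m = cd n"
  shows "is_epi C (m \<cdot> n)"
  using abelian.mono_comp[OF abelian_op_cat, of n m] assms by simp

lemma epi_cancel_zr:
  assumes "is_epi C e" "dm x = cd e" "x \<cdot> e = zr (dm e) (cd x)"
  shows "x = zr (cd e) (cd x)"
  using abelian.mono_cancel_zr[OF abelian_op_cat, of e x] assms by simp

lemma epi_if_zr_cancel:
  assumes "\<And>x. dm x = cd e \<Longrightarrow> x \<cdot> e = zr (dm e) (cd x) \<Longrightarrow> x = zr (cd e) (cd x)"
  shows "is_epi C e"
  using abelian.mono_if_zr_cancel[OF abelian_op_cat, of e] assms by simp

lemma epi_is_cokernel_of_kernel:
  assumes "is_epi C e" "is_kernel C k e"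
  shows "is_cokernel C e k"
  using abelian.mono_is_kernel_of_cokernel[OF abelian_op_cat, of e k] assms by simp

lemma image_le_mono:
  assumes R: "is_cokernel C r b" and I: "is_kernel C i r" and M: "is_mono C m"
    and x: "cd x = dm m" "m \<cdot> x = b"
  obtains s where "dm s = dm i" "cd s = dm m" "m \<cdot> s = i"
proof -
  have cb: "cd b = dm r" using cokernel_dm[OF R] by simp
  obtain c where Cc: "is_cokernel C c m" using cokernel_ex by blast
  have Km: "is_kernel C m c" using mono_is_kernel_of_cokernel[OF M Cc] .
  have dc: "dm c = cd m" using cokernel_dm[OF Cc] .
  have dx: "dm x = dm b" using x dm_comp[of m x] by simp
  have "c \<cdot> b = (c \<cdot> m) \<cdot> x" using x dc comp_assoc[of m x c] by simp
  also have "\<dots> = zr (dm b) (cd c)" using cokernel_comp_zr[OF Cc] x dx by simp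
  finally obtain t where t: "dm t = cd r" "cd t = cd c" "t \<cdot> r = c"
    using cokernel_desc[OF R, of c] dc x cb by (metis cd_comp)
  have "c \<cdot> i = t \<cdot> (r \<cdot> i)" using t kernel_cd[OF I] comp_assoc[of r i t] by simp
  also have "\<dots> = zr (dm i) (cd c)" using kernel_comp_zr[OF I] t by simp
  finally show ?thesis
    using kernel_lift[OF Km, of i] that dc x cb kernel_cd[OF I] by (metis cd_comp)
qed

lemma image_factorization:
  assumes R: "is_cokernel C r b" and I: "is_kernel C i r"
  obtains e where "dm e = dm b" "cd e = dm i" "i \<cdot> e = b" "is_epi C e"
proof -
  obtain e where e: "dm e = dm b" "cd e = dm i" "i \<cdot> e = b"
    using kernel_lift[OF I, of b] cokernel_comp_zr[OF R] cokernel_dm[OF R] by metis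
  have "is_epi C e"
  proof (rule epi_if_zr_cancel)
    fix g assume g: "dm g = cd e" "g \<cdot> e = zr (dm e) (cd g)"
    obtain k where K: "is_kernel C k g" using kernel_ex by blast
    have ck: "cd k = dm i" using kernel_cd[OF K] g e by simp
    obtain e' where e': "cd e' = dm k" "k \<cdot> e' = e"
      using kernel_lift[OF K, of e] g by metis
    have "is_mono C (i \<cdot> k)"
      using mono_comp[OF kernel_mono[OF I] kernel_mono[OF K]] ck by simp
    moreover have "(i \<cdot> k) \<cdot> e' = b" using e e' ck comp_assoc[of k e' i] by simp
    ultimately obtain s where s: "dm s = dm i" "cd s = dm k" "(i \<cdot> k) \<cdot> s = i"
      using image_le_mono[OF R I, of "i \<cdot> k" e'] e' ck by auto
    have "i \<cdot> (k \<cdot> s) = i \<cdot> idn (dm i)" using s ck comp_assoc[of k s i] by simp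
    then have ks: "k \<cdot> s = idn (dm i)"
      using mono_cancel[OF kernel_mono[OF I], of "k \<cdot> s" "idn (dm i)"] ck s by simp
    have "g = (g \<cdot> k) \<cdot> s" using ks g e ck s comp_assoc[of k s g] kernel_cd[OF K] by simp
    also have "\<dots> = zr (cd e) (cd g)" using kernel_comp_zr[OF K] s e ck by simp
    finally show "g = zr (cd e) (cd g)" .
  qed
  then show ?thesis using that e by blast
qed

lemma coimage_factorization:
  assumes "is_kernel C k w" "is_cokernel C q k"
  obtains u where "dm u = cd q" "cd u = cd w" "u \<cdot> q = w" "is_mono C u"
  using abelian.image_factorization[OF abelian_op_cat, of k w q] assms by auto

end

section \<open>Pullbacks\<close>

definition is_pullback :: "('o, 'm) abcat \<Rightarrow> 'm \<Rightarrow> 'm \<Rightarrow> 'm \<Rightarrow> 'm \<Rightarrow> bool" where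
  "is_pullback C a b p1 p2 \<longleftrightarrow> Cod C a = Cod C b \<and> Cod C p1 = Dom C a \<and> Cod C p2 = Dom C b \<and>
     Dom C p1 = Dom C p2 \<and> Comp C a p1 = Comp C b p2 \<and>
     (\<forall>x y. Cod C x = Dom C a \<and> Cod C y = Dom C b \<and> Dom C x = Dom C y \<and> Comp C a x = Comp C b y \<longrightarrow>
        (\<exists>w. Dom C w = Dom C x \<and> Cod C w = Dom C p1 \<and> Comp C p1 w = x \<and> Comp C p2 w = y)) \<and>
     (\<forall>w w'. Cod C w = Dom C p1 \<and> Cod C w' = Dom C p1 \<and> Dom C w = Dom C w' \<and>
        Comp C p1 w = Comp C p1 w' \<and> Comp C p2 w = Comp C p2 w' \<longrightarrow> w = w')"

lemma is_pullback_swap: "is_pullback C a b p1 p2 \<Longrightarrow> is_pullback C b a p2 p1"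
  unfolding is_pullback_def by metis

text \<open>The pullback of \<open>a\<close> and \<open>b\<close> is the kernel of \<open>[a, -b] : A \<oplus> B \<rightarrow> Z\<close>;
  here \<open>n\<close> plays the role of \<open>-b\<close>.\<close>

locale biproduct_difference = abelian C for C :: "('o, 'm) abcat" +
  fixes a b i1 i2 \<pi>1 \<pi>2 n :: 'm
  assumes cd_eq: "cd a = cd b"
    and biproduct_dm_cd [simp]: "dm i1 = dm a" "dm i2 = dm b" "cd i2 = cd i1"
      "dm \<pi>1 = cd i1" "cd \<pi>1 = dm a" "dm \<pi>2 = cd i1" "cd \<pi>2 = dm b"
    and biproduct [simp]: "\<pi>1 \<cdot> i1 = idn (dm a)" "\<pi>2 \<cdot> i2 = idn (dm b)"
      "\<pi>2 \<cdot> i1 = zr (dm a) (dm b)" "\<pi>1 \<cdot> i2 = zr (dm b) (dm a)"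
      "ad (i1 \<cdot> \<pi>1) (i2 \<cdot> \<pi>2) = idn (cd i1)"
    and negation [simp]: "dm n = dm b" "cd n = cd b" "ad b n = zr (dm b) (cd b)"
begin

definition difference :: 'm where
  "difference = ad (a \<cdot> \<pi>1) (n \<cdot> \<pi>2)"

lemma dm_difference [simp]: "dm difference = cd i1"
  and cd_difference [simp]: "cd difference = cd b"
  using cd_eq by (simp_all add: difference_def)

lemma difference_comp_i1 [simp]: "difference \<cdot> i1 = a"
proof -
  have "difference \<cdot> i1 = ad ((a \<cdot> \<pi>1) \<cdot> i1) ((n \<cdot> \<pi>2) \<cdot> i1)"
    unfolding difference_def by (rule comp_ad_distrib_right) (use cd_eq in auto)
  also have "\<dots> = a" using cd_eq by (simp add: comp_assoc)
  finally show ?thesis .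
qed

lemma difference_comp_i2 [simp]: "difference \<cdot> i2 = n"
proof -
  have "difference \<cdot> i2 = ad ((a \<cdot> \<pi>1) \<cdot> i2) ((n \<cdot> \<pi>2) \<cdot> i2)"
    unfolding difference_def by (rule comp_ad_distrib_right) (use cd_eq in auto)
  also have "\<dots> = n" using cd_eq by (simp add: comp_assoc)
  finally show ?thesis .
qed

lemma epi_difference:
  assumes E: "is_epi C a" shows "is_epi C difference"
proof (rule epi_if_zr_cancel)
  fix x assume x: "dm x = cd difference" "x \<cdot> difference = zr (dm difference) (cd x)"
  have "x \<cdot> a = (x \<cdot> difference) \<cdot> i1" using x(1) by (simp add: comp_assoc)
  also have "\<dots> = zr (dm a) (cd x)" using x by simp
  finally show "x = zr (cd difference) (cd x)" using epi_cancel_zr[OF E, of x] x cd_eq by simp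
qed

context
  fixes k assumes kernel: "is_kernel C k difference"
begin

lemma cd_kernel [simp]: "cd k = cd i1"
  using kernel_cd[OF kernel] by simp

lemma kernel_decompose:
  assumes "cd v = dm k"
  shows "k \<cdot> v = ad (i1 \<cdot> ((\<pi>1 \<cdot> k) \<cdot> v)) (i2 \<cdot> ((\<pi>2 \<cdot> k) \<cdot> v))"
proof -
  have "k \<cdot> v = ad (i1 \<cdot> \<pi>1) (i2 \<cdot> \<pi>2) \<cdot> (k \<cdot> v)" using assms by simp
  also have "\<dots> = ad ((i1 \<cdot> \<pi>1) \<cdot> (k \<cdot> v)) ((i2 \<cdot> \<pi>2) \<cdot> (k \<cdot> v))"
    by (rule comp_ad_distrib_right) (use assms in auto)
  also have "\<dots> = ad (i1 \<cdot> ((\<pi>1 \<cdot> k) \<cdot> v)) (i2 \<cdot> ((\<pi>2 \<cdot> k) \<cdot> v))"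
    using assms by (simp add: comp_assoc)
  finally show ?thesis .
qed

lemma kernel_difference_is_pullback: "is_pullback C a b (\<pi>1 \<cdot> k) (\<pi>2 \<cdot> k)"
proof -
  have "ad (a \<cdot> (\<pi>1 \<cdot> k)) (n \<cdot> (\<pi>2 \<cdot> k)) = difference \<cdot> k"
    unfolding difference_def using cd_eq
    by (simp add: comp_ad_distrib_right comp_assoc)
  also have "\<dots> = zr (dm k) (cd b)" using kernel_comp_zr[OF kernel] by simp
  finally have "ad (a \<cdot> (\<pi>1 \<cdot> k)) (n \<cdot> (\<pi>2 \<cdot> k)) = zr (dm k) (cd b)" .
  moreover have "ad (b \<cdot> (\<pi>2 \<cdot> k)) (n \<cdot> (\<pi>2 \<cdot> k)) = zr (dm k) (cd b)"
    using comp_ad_distrib_right[of n b "\<pi>2 \<cdot> k", symmetric] by simp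
  ultimately have commutes: "a \<cdot> (\<pi>1 \<cdot> k) = b \<cdot> (\<pi>2 \<cdot> k)"
    using ad_right_inverse_unique[of "a \<cdot> (\<pi>1 \<cdot> k)" "n \<cdot> (\<pi>2 \<cdot> k)" "b \<cdot> (\<pi>2 \<cdot> k)"] cd_eq
    by auto
  have lift: "\<exists>w. dm w = dm x \<and> cd w = dm k \<and> (\<pi>1 \<cdot> k) \<cdot> w = x \<and> (\<pi>2 \<cdot> k) \<cdot> w = y"
    if X: "cd x = dm a" "cd y = dm b" "dm x = dm y" "a \<cdot> x = b \<cdot> y" for x y
  proof -
    define s where "s = ad (i1 \<cdot> x) (i2 \<cdot> y)"
    have s_dm_cd [simp]: "dm s = dm x" "cd s = cd i1" using X by (simp_all add: s_def)
    have "difference \<cdot> s = ad (b \<cdot> y) (n \<cdot> y)"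
      unfolding s_def using X by (simp add: comp_ad_distrib_left comp_assoc[symmetric])
    also have "\<dots> = zr (dm s) (cd difference)"
      using comp_ad_distrib_right[of n b y, symmetric] X by simp
    finally obtain w where w: "dm w = dm s" "cd w = dm k" "k \<cdot> w = s"
      using kernel_lift[OF kernel, of s] by auto
    have "\<pi>1 \<cdot> s = x" "\<pi>2 \<cdot> s = y"
      unfolding s_def using X by (simp_all add: comp_ad_distrib_left comp_assoc[symmetric])
    then show ?thesis using w by (intro exI[of _ w]) (simp add: comp_assoc)
  qed
  have jointly_mono: "w = w'"
    if W: "cd w = dm k" "cd w' = dm k" "dm w = dm w'"
      "(\<pi>1 \<cdot> k) \<cdot> w = (\<pi>1 \<cdot> k) \<cdot> w'" "(\<pi>2 \<cdot> k) \<cdot> w = (\<pi>2 \<cdot> k) \<cdot> w'" for w w'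
  proof -
    have "k \<cdot> w = k \<cdot> w'" using kernel_decompose[of w] kernel_decompose[of w'] W by simp
    then show ?thesis using mono_cancel[OF kernel_mono[OF kernel]] W by simp
  qed
  show ?thesis
    unfolding is_pullback_def using commutes lift jointly_mono cd_eq by auto
qed

lemma pullback_leg_epi:
  assumes E: "is_epi C a" shows "is_epi C (\<pi>2 \<cdot> k)"
proof (rule epi_if_zr_cancel)
  have Q: "is_cokernel C difference k"
    using epi_is_cokernel_of_kernel[OF epi_difference[OF E] kernel] .
  fix g assume g: "dm g = cd (\<pi>2 \<cdot> k)" "g \<cdot> (\<pi>2 \<cdot> k) = zr (dm (\<pi>2 \<cdot> k)) (cd g)"
  have "(g \<cdot> \<pi>2) \<cdot> k = zr (dm k) (cd (g \<cdot> \<pi>2))" using g by (simp add: comp_assoc)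
  then obtain t where t: "dm t = cd b" "cd t = cd g" "t \<cdot> difference = g \<cdot> \<pi>2"
    using cokernel_desc[OF Q, of "g \<cdot> \<pi>2"] g by auto
  have "t \<cdot> a = g \<cdot> (\<pi>2 \<cdot> i1)"
    using t g difference_comp_i1 comp_assoc[of difference i1 t] comp_assoc[of \<pi>2 i1 g] by simp
  also have "\<dots> = zr (dm a) (cd t)" using t g by simp
  finally have "t = zr (cd a) (cd t)" using epi_cancel_zr[OF E, of t] t cd_eq by simp
  have "g = g \<cdot> (\<pi>2 \<cdot> i2)" using g by simp
  also have "\<dots> = t \<cdot> n"
    using t g difference_comp_i2 comp_assoc[of difference i2 t] comp_assoc[of \<pi>2 i2 g] by simp
  also have "\<dots> = zr (cd (\<pi>2 \<cdot> k)) (cd g)" using \<open>t = _\<close> t g cd_eq by simp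
  finally show "g = zr (cd (\<pi>2 \<cdot> k)) (cd g)" .
qed

end

end

context abelian
begin

lemma pullback_ex:
  assumes "cd a = cd b"
  obtains p1 p2 where "is_pullback C a b p1 p2" "is_epi C a \<Longrightarrow> is_epi C p2"
proof -
  obtain s i1 i2 \<pi>1 \<pi>2 where bp: "dm i1 = dm a" "cd i1 = s" "dm i2 = dm b" "cd i2 = s"
    "dm \<pi>1 = s" "cd \<pi>1 = dm a" "dm \<pi>2 = s" "cd \<pi>2 = dm b"
    "\<pi>1 \<cdot> i1 = idn (dm a)" "\<pi>2 \<cdot> i2 = idn (dm b)" "\<pi>2 \<cdot> i1 = zr (dm a) (dm b)"
    "\<pi>1 \<cdot> i2 = zr (dm b) (dm a)" "ad (i1 \<cdot> \<pi>1) (i2 \<cdot> \<pi>2) = idn s"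
    by (rule biproduct_ex)
  obtain n where "dm n = dm b" "cd n = cd b" "ad b n = zr (dm b) (cd b)"
    using ad_inverse_ex[of b] by auto
  then interpret biproduct_difference C a b i1 i2 \<pi>1 \<pi>2 n
    using assms bp by unfold_locales auto
  obtain k where "is_kernel C k difference" using kernel_ex by blast
  then show ?thesis
    using that kernel_difference_is_pullback pullback_leg_epi by blast
qed

lemma pullback_square:
  assumes "is_pullback C a b p1 p2"
  shows "cd a = cd b" "cd p1 = dm a" "cd p2 = dm b" "dm p1 = dm p2" "a \<cdot> p1 = b \<cdot> p2"
  using assms unfolding is_pullback_def by auto

lemma pullback_lift:
  assumes "is_pullback C a b p1 p2" "cd x = dm a" "cd y = dm b" "dm x = dm y" "a \<cdot> x = b \<cdot> y"
  obtains w where "dm w = dm x" "cd w = dm p1" "p1 \<cdot> w = x" "p2 \<cdot> w = y"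
  using assms unfolding is_pullback_def by blast

lemma pullback_jointly_mono:
  assumes "is_pullback C a b p1 p2" "cd w = dm p1" "cd w' = dm p1" "dm w = dm w'"
    "p1 \<cdot> w = p1 \<cdot> w'" "p2 \<cdot> w = p2 \<cdot> w'"
  shows "w = w'"
  using assms unfolding is_pullback_def by blast

lemma epi_pullback_square:
  assumes "is_epi C e" "cd v = cd e"
  obtains e' z where "is_epi C e'" "cd e' = dm v" "cd z = dm e" "dm z = dm e'" "e \<cdot> z = v \<cdot> e'"
proof -
  obtain p1 p2 where P: "is_pullback C e v p1 p2" and "is_epi C e \<Longrightarrow> is_epi C p2"
    using pullback_ex[OF assms(2)[symmetric]] by blast
  then show ?thesis
    using pullback_square[OF P] assms(1) by (intro that[of p2 p1]) auto
qed

text \<open>Lacking elements, the diagram chase replaces each element by an epimorphism onto its domain,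
  obtained by pulling back along an epi (\<open>epi_pullback_square\<close>).\<close>

lemma pullback_cokernel_comparison_mono:
  assumes P: "is_pullback C a b p1 p2" and Q: "is_cokernel C q p1" and R: "is_cokernel C r b"
    and u: "dm u = cd q" "u \<cdot> q = r \<cdot> a"
  shows "is_mono C u"
proof (rule mono_if_zr_cancel)
  note Pd = pullback_square[OF P]
  obtain ib where Ib: "is_kernel C ib r" using kernel_ex by blast
  have dq: "dm q = dm a" using cokernel_dm[OF Q] Pd by simp
  have dr: "dm r = cd b" using cokernel_dm[OF R] .
  have cu: "cd u = cd r" using u Pd dr dq cd_comp[of r a] cd_comp[of u q] by metis
  obtain eb where eb: "dm eb = dm b" "cd eb = dm ib" "ib \<cdot> eb = b" "is_epi C eb"
    using image_factorization[OF R Ib] by blast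
  fix x assume x: "cd x = dm u" "u \<cdot> x = zr (dm x) (cd u)"
  obtain e1 y where ey: "is_epi C e1" "cd e1 = dm x" "cd y = dm q" "dm y = dm e1" "q \<cdot> y = x \<cdot> e1"
    using epi_pullback_square[OF cokernel_epi[OF Q], of x] x u by metis
  have "r \<cdot> (a \<cdot> y) = (u \<cdot> q) \<cdot> y" using u ey dq dr Pd by (simp add: comp_assoc[symmetric])
  also have "\<dots> = (u \<cdot> x) \<cdot> e1" using u(1) ey(2,3,5) x(1) by (simp add: comp_assoc)
  also have "\<dots> = zr (dm (a \<cdot> y)) (cd r)" using x ey cu dq by simp
  finally have "r \<cdot> (a \<cdot> y) = zr (dm (a \<cdot> y)) (cd r)" .
  then obtain v where v: "dm v = dm (a \<cdot> y)" "cd v = dm ib" "ib \<cdot> v = a \<cdot> y"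
    using kernel_lift[OF Ib, of "a \<cdot> y"] dr Pd ey dq by (metis cd_comp)
  obtain e2 z where ez: "is_epi C e2" "cd e2 = dm v" "cd z = dm eb" "dm z = dm e2" "eb \<cdot> z = v \<cdot> e2"
    using epi_pullback_square[OF eb(4), of v] v eb by metis
  have "a \<cdot> (y \<cdot> e2) = (ib \<cdot> v) \<cdot> e2" using v ez ey dq by (simp add: comp_assoc[symmetric])
  also have "\<dots> = ib \<cdot> (eb \<cdot> z)" using v(1,2) ez(2,5) by (simp add: comp_assoc)
  also have "\<dots> = b \<cdot> z" using eb(2,3) ez(3) comp_assoc[of eb z ib] by simp
  finally have az: "a \<cdot> (y \<cdot> e2) = b \<cdot> z" .
  obtain w where w: "dm w = dm (y \<cdot> e2)" "cd w = dm p1" "p1 \<cdot> w = y \<cdot> e2"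
    using pullback_lift[OF P _ _ _ az] ey ez v eb dq Pd by auto
  have "x \<cdot> (e1 \<cdot> e2) = (q \<cdot> y) \<cdot> e2" using ey ez v dq by (simp add: comp_assoc[symmetric])
  also have "\<dots> = (q \<cdot> p1) \<cdot> w" using w(2,3) ey(3) ez(2) v(1) dq Pd by (simp add: comp_assoc)
  also have "\<dots> = zr (cd (e1 \<cdot> e2)) (cd x) \<cdot> (e1 \<cdot> e2)"
    using cokernel_comp_zr[OF Q] w ey ez v x u Pd dq by simp
  finally have "x \<cdot> (e1 \<cdot> e2) = zr (cd (e1 \<cdot> e2)) (cd x) \<cdot> (e1 \<cdot> e2)" .
  moreover have "is_epi C (e1 \<cdot> e2)" using epi_comp[OF ey(1) ez(1)] ez v ey dq by simp
  ultimately have "x = zr (cd (e1 \<cdot> e2)) (cd x)"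
    using epi_cancel[of "e1 \<cdot> e2" x "zr (cd (e1 \<cdot> e2)) (cd x)"] ey ez v dq by simp
  then show "x = zr (dm x) (dm u)" using ey ez v x dq by simp
qed

lemma kernel_idn:
  assumes Z: "is_zero_obj C z" shows "is_kernel C (zr z a) (idn a)"
  unfolding is_kernel_def
proof (intro conjI allI impI)
  show "cd (zr z a) = dm (idn a)" "idn a \<cdot> zr z a = zr (dm (zr z a)) (cd (idn a))" by simp_all
  fix g assume g: "cd g = dm (idn a) \<and> idn a \<cdot> g = zr (dm g) (cd (idn a))"
  then have g0: "g = zr (dm g) a" using comp_idn_left[of g a] by auto
  show "\<exists>!u. dm u = dm g \<and> cd u = dm (zr z a) \<and> zr z a \<cdot> u = g"
  proof (rule ex1I[of _ "zr (dm g) z"])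
    show "dm (zr (dm g) z) = dm g \<and> cd (zr (dm g) z) = dm (zr z a) \<and> zr z a \<cdot> zr (dm g) z = g"
      using g0 by simp
    fix u assume "dm u = dm g \<and> cd u = dm (zr z a) \<and> zr z a \<cdot> u = g"
    then have "u \<in> hom C (dm g) z" "zr (dm g) z \<in> hom C (dm g) z" by (auto simp: hom_def)
    then show "u = zr (dm g) z" using Z unfolding is_zero_obj_def by blast
  qed
qed

lemma cokernel_idn: "is_zero_obj C z \<Longrightarrow> is_cokernel C (zr a z) (idn a)"
  using abelian.kernel_idn[OF abelian_op_cat, of z a] by simp

end

section \<open>Amplitudes of kernels and cokernels\<close>

locale abelian_amplitude = abelian C for C :: "('o, 'm) abcat" +
  fixes \<alpha> :: "'o \<Rightarrow> ennreal"
  assumes amplitude: "amplitude C \<alpha>"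
begin

lemma amplitude_short_exact:
  assumes "is_mono C i" "is_epi C p" "is_kernel C i p"
  shows "\<alpha> (dm i) \<le> \<alpha> (cd i)" "\<alpha> (cd p) \<le> \<alpha> (cd i)" "\<alpha> (cd i) \<le> \<alpha> (dm i) + \<alpha> (cd p)"
  using amplitude assms unfolding amplitude_def short_exact_def by blast+

lemma amplitude_zero_obj: "is_zero_obj C z \<Longrightarrow> \<alpha> z = 0"
  using amplitude unfolding amplitude_def by blast

lemma amplitude_mono_le:
  assumes "is_mono C m" shows "\<alpha> (dm m) \<le> \<alpha> (cd m)"
proof -
  obtain q where Q: "is_cokernel C q m" using cokernel_ex by blast
  show ?thesis
    using amplitude_short_exact(1)[OF assms cokernel_epi[OF Q] mono_is_kernel_of_cokernel[OF assms Q]] .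
qed

lemma amplitude_le_ker_obj:
  assumes M: "is_mono C m" and m: "cd m = dm h" "h \<cdot> m = zr (dm m) (cd h)"
  shows "\<alpha> (dm m) \<le> \<alpha> (ker_obj C h)"
proof -
  define j where "j = (SOME j. is_kernel C j h)"
  have J: "is_kernel C j h" unfolding j_def using someI_ex[OF kernel_ex] .
  obtain s where s: "dm s = dm m" "cd s = dm j" "j \<cdot> s = m"
    using kernel_lift[OF J, of m] m by metis
  have "is_mono C s"
    using mono_comp_imp_mono_right[of j s] M s kernel_cd[OF J] by simp
  then have "\<alpha> (dm s) \<le> \<alpha> (cd s)" by (rule amplitude_mono_le)
  then show ?thesis using s unfolding ker_obj_def j_def by simp
qed

lemma amplitude_ker_obj:
  assumes K: "is_kernel C k f" shows "\<alpha> (ker_obj C f) = \<alpha> (dm k)"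
proof (rule antisym)
  define j where "j = (SOME j. is_kernel C j f)"
  have J: "is_kernel C j f" unfolding j_def using someI_ex[OF kernel_ex] .
  show "\<alpha> (dm k) \<le> \<alpha> (ker_obj C f)"
    using amplitude_le_ker_obj[OF kernel_mono[OF K] kernel_cd[OF K] kernel_comp_zr[OF K]] .
  obtain u where u: "dm u = dm j" "cd u = dm k" "k \<cdot> u = j"
    using kernel_lift[OF K, of j] kernel_cd[OF J] kernel_comp_zr[OF J] by metis
  have "is_mono C u"
    using mono_comp_imp_mono_right[of k u] kernel_mono[OF J] u kernel_cd[OF K] by simp
  then show "\<alpha> (ker_obj C f) \<le> \<alpha> (dm k)"
    using amplitude_mono_le[of u] u unfolding ker_obj_def j_def by simp
qed

lemma abelian_amplitude_op_cat: "abelian_amplitude (op_cat C) \<alpha>"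
proof -
  have "amplitude (op_cat C) \<alpha>" unfolding amplitude_def
  proof (intro conjI allI impI)
    fix z assume "is_zero_obj (op_cat C) z" then show "\<alpha> z = 0" using amplitude_zero_obj by simp
  next
    fix i p assume "short_exact (op_cat C) i p"
    then have E: "is_epi C i" and M: "is_mono C p" and Q: "is_cokernel C i p"
      unfolding short_exact_def by auto
    have K: "is_kernel C p i" using mono_is_kernel_of_cokernel[OF M Q] .
    have d: "dm i = cd p" using cokernel_dm[OF Q] .
    note s = amplitude_short_exact[OF M E K]
    show "\<alpha> (Dom (op_cat C) i) \<le> \<alpha> (Cod (op_cat C) i)"
      and "\<alpha> (Cod (op_cat C) p) \<le> \<alpha> (Cod (op_cat C) i)"
      and "\<alpha> (Cod (op_cat C) i) \<le> \<alpha> (Dom (op_cat C) i) + \<alpha> (Cod (op_cat C) p)"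
      using s d by (simp_all add: add.commute)
  qed
  then show ?thesis
    using abelian_op_cat unfolding abelian_amplitude_def abelian_amplitude_axioms_def by blast
qed

lemma amplitude_coker_obj: "is_cokernel C q f \<Longrightarrow> \<alpha> (coker_obj C f) = \<alpha> (cd q)"
  using abelian_amplitude.amplitude_ker_obj[OF abelian_amplitude_op_cat, of q f] by simp

text \<open>The map \<open>w\<close> factors as \<open>dm w \<rightarrow> coim w \<rightarrow> cd w\<close>, an epi with kernel \<open>ker w\<close>
  followed by a mono.\<close>

lemma amplitude_dm_le: "\<alpha> (dm w) \<le> \<alpha> (ker_obj C w) + \<alpha> (cd w)"
proof -
  obtain k where K: "is_kernel C k w" using kernel_ex by blast
  obtain q where Q: "is_cokernel C q k" using cokernel_ex by blast
  have "\<alpha> (cd k) \<le> \<alpha> (dm k) + \<alpha> (cd q)"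
    using amplitude_short_exact(3)[OF kernel_mono[OF K] cokernel_epi[OF Q]
        mono_is_kernel_of_cokernel[OF kernel_mono[OF K] Q]] .
  moreover obtain u where "dm u = cd q" "cd u = cd w" "is_mono C u"
    using coimage_factorization[OF K Q] by metis
  then have "\<alpha> (cd q) \<le> \<alpha> (cd w)" using amplitude_mono_le by metis
  ultimately show ?thesis
    using amplitude_ker_obj[OF K] kernel_cd[OF K] by (metis add_left_mono order_trans)
qed

lemma amplitude_ker_obj_comp:
  assumes gh: "dm g = cd h"
  shows "\<alpha> (ker_obj C (g \<cdot> h)) \<le> \<alpha> (ker_obj C h) + \<alpha> (ker_obj C g)"
proof -
  obtain k where K: "is_kernel C k (g \<cdot> h)" using kernel_ex by blast
  have ck: "cd k = dm h" using kernel_cd[OF K] gh by simp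
  obtain j where J: "is_kernel C j g" using kernel_ex by blast
  have "g \<cdot> (h \<cdot> k) = zr (dm (h \<cdot> k)) (cd g)"
    using kernel_comp_zr[OF K] gh ck comp_assoc[of h k g] by simp
  then obtain w where w: "dm w = dm k" "cd w = dm j" "j \<cdot> w = h \<cdot> k"
    using kernel_lift[OF J, of "h \<cdot> k"] gh ck kernel_cd[OF J] by (metis cd_comp dm_comp)
  obtain k' where K': "is_kernel C k' w" using kernel_ex by blast
  have ck': "cd k' = dm k" using kernel_cd[OF K'] w by simp
  have "h \<cdot> (k \<cdot> k') = (j \<cdot> w) \<cdot> k'" using w ck ck' comp_assoc[of k k' h] by simp
  also have "\<dots> = zr (dm (k \<cdot> k')) (cd h)"
    using kernel_comp_zr[OF K'] w ck ck' kernel_cd[OF J] gh comp_assoc[of w k' j] by simp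
  finally have "\<alpha> (dm (k \<cdot> k')) \<le> \<alpha> (ker_obj C h)"
    using amplitude_le_ker_obj[of "k \<cdot> k'" h] mono_comp[OF kernel_mono[OF K] kernel_mono[OF K']] ck ck'
    by simp
  then have "\<alpha> (ker_obj C w) \<le> \<alpha> (ker_obj C h)"
    using amplitude_ker_obj[OF K'] ck' by simp
  moreover have "\<alpha> (ker_obj C (g \<cdot> h)) \<le> \<alpha> (ker_obj C w) + \<alpha> (ker_obj C g)"
    using amplitude_dm_le[of w] amplitude_ker_obj[OF K] amplitude_ker_obj[OF J] w by simp
  ultimately show ?thesis by (metis add_right_mono order_trans)
qed

lemma amplitude_coker_obj_comp:
  "dm g = cd h \<Longrightarrow> \<alpha> (coker_obj C (g \<cdot> h)) \<le> \<alpha> (coker_obj C g) + \<alpha> (coker_obj C h)"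
  using abelian_amplitude.amplitude_ker_obj_comp[OF abelian_amplitude_op_cat, of h g] by simp

lemma amplitude_ker_obj_pullback:
  assumes P: "is_pullback C a b p1 p2"
  shows "\<alpha> (ker_obj C p1) \<le> \<alpha> (ker_obj C b)"
proof -
  note Pd = pullback_square[OF P]
  obtain i where I: "is_kernel C i p1" using kernel_ex by blast
  have ci: "cd i = dm p1" using kernel_cd[OF I] .
  have "is_mono C (p2 \<cdot> i)"
    unfolding is_mono_def
  proof (intro allI impI)
    fix x y assume H: "cd x = dm (p2 \<cdot> i) \<and> cd y = dm (p2 \<cdot> i) \<and> dm x = dm y \<and>
      (p2 \<cdot> i) \<cdot> x = (p2 \<cdot> i) \<cdot> y"
    have "p1 \<cdot> (i \<cdot> x) = p1 \<cdot> (i \<cdot> y)"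
      using H Pd ci kernel_comp_zr[OF I] comp_assoc[of i x p1] comp_assoc[of i y p1] by simp
    moreover have "p2 \<cdot> (i \<cdot> x) = p2 \<cdot> (i \<cdot> y)"
      using H Pd ci comp_assoc[of i x p2] comp_assoc[of i y p2] by simp
    ultimately have "i \<cdot> x = i \<cdot> y"
      using pullback_jointly_mono[OF P] H Pd ci by simp
    then show "x = y" using mono_cancel[OF kernel_mono[OF I]] H Pd ci by simp
  qed
  moreover have "b \<cdot> (p2 \<cdot> i) = zr (dm (p2 \<cdot> i)) (cd b)"
    using Pd ci kernel_comp_zr[OF I] comp_assoc[of p2 i b] comp_assoc[of p1 i a] by simp
  ultimately have "\<alpha> (dm (p2 \<cdot> i)) \<le> \<alpha> (ker_obj C b)"
    using amplitude_le_ker_obj[of "p2 \<cdot> i" b] Pd ci by simp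
  then show ?thesis using amplitude_ker_obj[OF I] Pd ci by simp
qed

lemma amplitude_coker_obj_pullback:
  assumes P: "is_pullback C a b p1 p2"
  shows "\<alpha> (coker_obj C p1) \<le> \<alpha> (coker_obj C b)"
proof -
  note Pd = pullback_square[OF P]
  obtain q where Q: "is_cokernel C q p1" using cokernel_ex by blast
  obtain r where R: "is_cokernel C r b" using cokernel_ex by blast
  have dr: "dm r = cd b" using cokernel_dm[OF R] .
  have "(r \<cdot> a) \<cdot> p1 = zr (dm p1) (cd (r \<cdot> a))"
    using cokernel_comp_zr[OF R] Pd dr comp_assoc[of a p1 r] comp_assoc[of b p2 r] by simp
  then obtain u where u: "dm u = cd q" "cd u = cd (r \<cdot> a)" "u \<cdot> q = r \<cdot> a"
    using cokernel_desc[OF Q, of "r \<cdot> a"] Pd dr by (metis dm_comp)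
  have "is_mono C u" using pullback_cokernel_comparison_mono[OF P Q R u(1,3)] .
  then have "\<alpha> (dm u) \<le> \<alpha> (cd u)" by (rule amplitude_mono_le)
  then show ?thesis using amplitude_coker_obj[OF Q] amplitude_coker_obj[OF R] u Pd dr by simp
qed

lemma amplitude_ker_obj_idn [simp]: "\<alpha> (ker_obj C (idn a)) = 0"
  and amplitude_coker_obj_idn [simp]: "\<alpha> (coker_obj C (idn a)) = 0"
proof -
  obtain z where Z: "is_zero_obj C z" using zero_obj_ex by blast
  show "\<alpha> (ker_obj C (idn a)) = 0"
    using amplitude_ker_obj[OF kernel_idn[OF Z]] amplitude_zero_obj[OF Z] by simp
  show "\<alpha> (coker_obj C (idn a)) = 0"
    using amplitude_coker_obj[OF cokernel_idn[OF Z]] amplitude_zero_obj[OF Z] by simp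
qed

end

section \<open>The cost distance\<close>

lemma ennreal_Inf_add_const: "S \<noteq> {} \<Longrightarrow> Inf S + (c::ennreal) = (INF s\<in>S. s + c)"
  using continuous_at_Inf_mono[of "\<lambda>x. x + c" S] continuous_add[of "at_right (Inf S)" "\<lambda>x. x" "\<lambda>x. c"]
  by (auto simp: mono_def add_right_mono)

lemma ennreal_le_Inf_add:
  assumes "\<And>x y. x \<in> S \<Longrightarrow> y \<in> T \<Longrightarrow> (d::ennreal) \<le> x + y"
  shows "d \<le> Inf S + Inf T"
proof (cases "S = {} \<or> T = {}")
  case True then show ?thesis by auto
next
  case False
  have "d \<le> x + Inf T" if "x \<in> S" for x
  proof -
    have "x + Inf T = (INF y\<in>T. y + x)"
      using False ennreal_Inf_add_const[of T x] by (simp add: add.commute)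
    then show ?thesis using assms[OF that] by (auto intro!: INF_greatest simp: add.commute)
  qed
  then have "d \<le> (INF x\<in>S. x + Inf T)" by (auto intro!: INF_greatest)
  then show ?thesis using ennreal_Inf_add_const[of S "Inf T"] False by simp
qed

lemma span_or_cospan_commute: "span_or_cospan C A B \<phi> \<psi> \<longleftrightarrow> span_or_cospan C B A \<psi> \<phi>"
  unfolding span_or_cospan_def by auto

locale amplitude_cost = abelian_amplitude C \<alpha> for C :: "('o, 'm) abcat" and \<alpha> +
  fixes f :: "ennreal \<Rightarrow> ennreal \<Rightarrow> ennreal \<Rightarrow> ennreal \<Rightarrow> ennreal"
  assumes cost: "cost_function f"
begin

lemma cost_mono: "x1 \<le> y1 \<Longrightarrow> x2 \<le> y2 \<Longrightarrow> x3 \<le> y3 \<Longrightarrow> x4 \<le> y4 \<Longrightarrow> f x1 x2 x3 x4 \<le> f y1 y2 y3 y4"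
  and cost_subadditive: "f (x1 + y1) (x2 + y2) (x3 + y3) (x4 + y4) \<le> f x1 x2 x3 x4 + f y1 y2 y3 y4"
  and cost_zero: "f 0 0 0 0 = 0"
  using cost unfolding cost_function_def by blast+

lemma cost_swap: "f x1 x2 x3 x4 = f x3 x4 x1 x2"
  using cost unfolding cost_function_def by metis

lemma f_cost_commute: "f_cost C \<alpha> f \<phi> \<psi> = f_cost C \<alpha> f \<psi> \<phi>"
  unfolding f_cost_def by (rule cost_swap)

lemma dist_f_self: "dist_f C \<alpha> f A A = 0"
proof -
  have "span_or_cospan C A A (idn A) (idn A)" unfolding span_or_cospan_def by simp
  then have "dist_f C \<alpha> f A A \<le> f_cost C \<alpha> f (idn A) (idn A)"
    unfolding dist_f_def by (auto intro!: Inf_lower)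
  also have "\<dots> = 0" unfolding f_cost_def by (simp add: cost_zero)
  finally show ?thesis by simp
qed

lemma dist_f_commute: "dist_f C \<alpha> f A B = dist_f C \<alpha> f B A"
proof -
  have swap: "{f_cost C \<alpha> f \<phi> \<psi> | \<phi> \<psi>. span_or_cospan C X Y \<phi> \<psi>} \<subseteq>
      {f_cost C \<alpha> f \<phi> \<psi> | \<phi> \<psi>. span_or_cospan C Y X \<phi> \<psi>}" for X Y
  proof
    fix z assume "z \<in> {f_cost C \<alpha> f \<phi> \<psi> | \<phi> \<psi>. span_or_cospan C X Y \<phi> \<psi>}"
    then obtain \<phi> \<psi> where "span_or_cospan C X Y \<phi> \<psi>" "z = f_cost C \<alpha> f \<phi> \<psi>" by blast
    then have "span_or_cospan C Y X \<psi> \<phi> \<and> z = f_cost C \<alpha> f \<psi> \<phi>"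
      using span_or_cospan_commute[of C X Y \<phi> \<psi>] f_cost_commute[of \<phi> \<psi>] by simp
    then show "z \<in> {f_cost C \<alpha> f \<phi> \<psi> | \<phi> \<psi>. span_or_cospan C Y X \<phi> \<psi>}" by blast
  qed
  show ?thesis unfolding dist_f_def using swap[of A B] swap[of B A] by simp
qed

lemma span_cost_le_span_or_cospan:
  assumes "span_or_cospan C A B \<phi> \<psi>"
  obtains \<phi>' \<psi>' where "dm \<phi>' = dm \<psi>'" "cd \<phi>' = A" "cd \<psi>' = B"
    "f_cost C \<alpha> f \<phi>' \<psi>' \<le> f_cost C \<alpha> f \<phi> \<psi>"
proof (cases "dm \<phi> = dm \<psi> \<and> cd \<phi> = A \<and> cd \<psi> = B")
  case True then show ?thesis using that by blast
next
  case False
  then have c: "cd \<phi> = cd \<psi>" "dm \<phi> = A" "dm \<psi> = B"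
    using assms unfolding span_or_cospan_def by auto
  obtain p1 p2 where P: "is_pullback C \<phi> \<psi> p1 p2" using pullback_ex[OF c(1)] by blast
  note P' = is_pullback_swap[OF P]
  have "f_cost C \<alpha> f p1 p2 \<le> f (\<alpha> (ker_obj C \<psi>)) (\<alpha> (coker_obj C \<psi>)) (\<alpha> (ker_obj C \<phi>)) (\<alpha> (coker_obj C \<phi>))"
    unfolding f_cost_def
    by (intro cost_mono amplitude_ker_obj_pullback[OF P] amplitude_coker_obj_pullback[OF P]
        amplitude_ker_obj_pullback[OF P'] amplitude_coker_obj_pullback[OF P'])
  also have "\<dots> = f_cost C \<alpha> f \<phi> \<psi>" unfolding f_cost_def by (rule cost_swap)
  finally show ?thesis using that pullback_square[OF P] c by simp
qed

lemma span_compose_cost: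
  assumes s1: "dm \<phi>1 = dm \<psi>1" "cd \<phi>1 = A" "cd \<psi>1 = B"
    and s2: "dm \<phi>2 = dm \<psi>2" "cd \<phi>2 = B" "cd \<psi>2 = D"
  obtains \<phi> \<psi> where "span_or_cospan C A D \<phi> \<psi>"
    "f_cost C \<alpha> f \<phi> \<psi> \<le> f_cost C \<alpha> f \<phi>1 \<psi>1 + f_cost C \<alpha> f \<phi>2 \<psi>2"
proof -
  have "cd \<psi>1 = cd \<phi>2" using s1 s2 by simp
  then obtain p1 p2 where P: "is_pullback C \<psi>1 \<phi>2 p1 p2" by (meson pullback_ex)
  note P' = is_pullback_swap[OF P]
  note d = pullback_square[OF P]
  have soc: "span_or_cospan C A D (\<phi>1 \<cdot> p1) (\<psi>2 \<cdot> p2)"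
    using d s1 s2 unfolding span_or_cospan_def by simp
  let ?k = "\<lambda>x. \<alpha> (ker_obj C x)" and ?c = "\<lambda>x. \<alpha> (coker_obj C x)"
  have "?k (\<phi>1 \<cdot> p1) \<le> ?k p1 + ?k \<phi>1" by (rule amplitude_ker_obj_comp) (use d s1 in auto)
  also have "\<dots> \<le> ?k \<phi>2 + ?k \<phi>1" using amplitude_ker_obj_pullback[OF P] by (rule add_right_mono)
  finally have k1: "?k (\<phi>1 \<cdot> p1) \<le> ?k \<phi>1 + ?k \<phi>2" by (simp add: add.commute)
  have "?c (\<phi>1 \<cdot> p1) \<le> ?c \<phi>1 + ?c p1" by (rule amplitude_coker_obj_comp) (use d s1 in auto)
  also have "\<dots> \<le> ?c \<phi>1 + ?c \<phi>2" using amplitude_coker_obj_pullback[OF P] by (rule add_left_mono)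
  finally have c1: "?c (\<phi>1 \<cdot> p1) \<le> ?c \<phi>1 + ?c \<phi>2" .
  have "?k (\<psi>2 \<cdot> p2) \<le> ?k p2 + ?k \<psi>2" by (rule amplitude_ker_obj_comp) (use d s2 in auto)
  also have "\<dots> \<le> ?k \<psi>1 + ?k \<psi>2" using amplitude_ker_obj_pullback[OF P'] by (rule add_right_mono)
  finally have k2: "?k (\<psi>2 \<cdot> p2) \<le> ?k \<psi>1 + ?k \<psi>2" .
  have "?c (\<psi>2 \<cdot> p2) \<le> ?c \<psi>2 + ?c p2" by (rule amplitude_coker_obj_comp) (use d s2 in auto)
  also have "\<dots> \<le> ?c \<psi>2 + ?c \<psi>1" using amplitude_coker_obj_pullback[OF P'] by (rule add_left_mono)
  finally have c2: "?c (\<psi>2 \<cdot> p2) \<le> ?c \<psi>1 + ?c \<psi>2" by (simp add: add.commute)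
  have "f_cost C \<alpha> f (\<phi>1 \<cdot> p1) (\<psi>2 \<cdot> p2) \<le>
      f (?k \<phi>1 + ?k \<phi>2) (?c \<phi>1 + ?c \<phi>2) (?k \<psi>1 + ?k \<psi>2) (?c \<psi>1 + ?c \<psi>2)"
    unfolding f_cost_def using k1 c1 k2 c2 by (rule cost_mono)
  also have "\<dots> \<le> f_cost C \<alpha> f \<phi>1 \<psi>1 + f_cost C \<alpha> f \<phi>2 \<psi>2"
    unfolding f_cost_def by (rule cost_subadditive)
  finally show ?thesis by (rule that[OF soc])
qed

lemma dist_f_triangle: "dist_f C \<alpha> f A D \<le> dist_f C \<alpha> f A B + dist_f C \<alpha> f B D"
  unfolding dist_f_def
proof (rule ennreal_le_Inf_add)
  fix x y
  assume "x \<in> {f_cost C \<alpha> f \<phi> \<psi> | \<phi> \<psi>. span_or_cospan C A B \<phi> \<psi>}"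
    and "y \<in> {f_cost C \<alpha> f \<phi> \<psi> | \<phi> \<psi>. span_or_cospan C B D \<phi> \<psi>}"
  then obtain \<phi>1 \<psi>1 \<phi>2 \<psi>2 where
    "span_or_cospan C A B \<phi>1 \<psi>1" "x = f_cost C \<alpha> f \<phi>1 \<psi>1"
    "span_or_cospan C B D \<phi>2 \<psi>2" "y = f_cost C \<alpha> f \<phi>2 \<psi>2"
    by blast
  then obtain a1 b1 a2 b2 where
    r1: "dm a1 = dm b1" "cd a1 = A" "cd b1 = B" "f_cost C \<alpha> f a1 b1 \<le> x" and
    r2: "dm a2 = dm b2" "cd a2 = B" "cd b2 = D" "f_cost C \<alpha> f a2 b2 \<le> y"
    by (metis span_cost_le_span_or_cospan)
  obtain \<phi> \<psi> where "span_or_cospan C A D \<phi> \<psi>"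
    and "f_cost C \<alpha> f \<phi> \<psi> \<le> f_cost C \<alpha> f a1 b1 + f_cost C \<alpha> f a2 b2"
    using span_compose_cost[OF r1(1-3) r2(1-3)] by blast
  then show "Inf {f_cost C \<alpha> f \<phi> \<psi> | \<phi> \<psi>. span_or_cospan C A D \<phi> \<psi>} \<le> x + y"
    using r1(4) r2(4) by (blast intro: Inf_lower2 order_trans add_mono)
qed

lemma ext_pseudometric_dist_f: "ext_pseudometric (dist_f C \<alpha> f)"
  unfolding ext_pseudometric_def using dist_f_self dist_f_commute dist_f_triangle by blast

end

theorem mainTheorem4:
  fixes C :: "('o, 'm) abcat" and \<alpha> :: "'o \<Rightarrow> ennreal"
    and f :: "ennreal \<Rightarrow> ennreal \<Rightarrow> ennreal \<Rightarrow> ennreal \<Rightarrow> ennreal"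
  assumes "abelian_category C" and "amplitude C \<alpha>" and "cost_function f"
  shows "ext_pseudometric (dist_f C \<alpha> f)"
proof -
  interpret amplitude_cost C \<alpha> f
    using assms by unfold_locales
  show ?thesis by (rule ext_pseudometric_dist_f)
qed

end
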